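(* Consider the FlexPD-C iterates described in the context with $\beta>0$, integer $T\ge1$ and $0<\alpha<1/\rho(B)$, and let $C=\sum_{t=0}^{T-1}(I-\alpha B)^t$, $M=C^{-1}(I-\alpha B)^T$, $N=\frac{1}{\alpha}(C^{-1}-M)$. Then for every $k\ge0$, \[\alpha\big(\nabla f(x^k)-\nabla f(x^* )\big)=M(x^k-x^{k+1})+\alpha(\beta A'A-N)(x^{k+1}-x^* )-\alpha A'(\lambda^{k+1}-\lambda^* ).\]
   Context: Setting: $n$ agents are connected by a connected undirected graph with edge set $\mathcal E$, $\epsilon=|\mathcal E|$. For $x\in\mathbb R^n$ let $f(x)=\sum_{i=1}^n f_i(x_i)$, where each $f_i:\mathbb R\to\mathbb R$ is twice differentiable with $m\le f_i''\le L$ for constants $0<m\le L$; $\nabla f(x)=(f_1'(x_1),\dots,f_n'(x_n))'$. $A\in\mathbb R^{\epsilon\times n}$ is the edge–node incidence matrix (null space spanned by the all-ones vector). $B\in\mathbb R^{n\times n}$ is symmetric positive semidefinite with the same null space as $A$, off-diagonal entries nonzero only on edges; $\rho(B)$ is its largest eigenvalue. $x^*$ is the unique minimizer of $f$ subject to $Ax=0$ and $\lambda^*$ a Lagrange multiplier with $\nabla f(x^* )+A'\lambda^*=0$, $Ax^*=0$, $Bx^*=0$, chosen in the column space of $A$. FlexPD-C: given $\alpha,\beta>0$, $T\ge1$, $x^0$ arbitrary, $\lambda^0=0$; for $k\ge0$: $x^{k+1,0}=x^k$; for $t=1,\dots,T$, $x^{k+1,t}=x^{k+1,t-1}-\alpha\nabla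 f(x^k)-\alpha A'\lambda^k-\alpha Bx^{k+1,t-1}$; then $x^{k+1}=x^{k+1,T}$, $\lambda^{k+1}=\lambda^k+\beta Ax^{k+1}$. *)

theory Defs
  imports "HOL-Analysis.Analysis"
begin

text \<open>Graph: nodes of finite type 'n, edges of finite type 'e; each edge e has two distinct
 endpoints src e, dst e (an arbitrary orientation, used only for the incidence matrix).\<close>

definition simple_graph :: "('e \<Rightarrow> 'n) \<Rightarrow> ('e \<Rightarrow> 'n) \<Rightarrow> bool" where
  "simple_graph src dst \<longleftrightarrow> (\<forall>e. src e \<noteq> dst e) \<and>
     (\<forall>e e'. {src e, dst e} = {src e', dst e'} \<longrightarrow> e = e')"

definition adjacent :: "('e \<Rightarrow> 'n) \<Rightarrow> ('e \<Rightarrow> 'n) \<Rightarrow> 'n \<Rightarrow> 'n \<Rightarrow> bool" where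
  "adjacent src dst i j \<longleftrightarrow> (\<exists>e. {src e, dst e} = {i, j})"

definition graph_connected :: "('e \<Rightarrow> 'n) \<Rightarrow> ('e \<Rightarrow> 'n) \<Rightarrow> bool" where
  "graph_connected src dst \<longleftrightarrow> (\<forall>i j. (adjacent src dst)\<^sup>*\<^sup>* i j)"

definition incidence :: "('e::finite \<Rightarrow> 'n::finite) \<Rightarrow> ('e \<Rightarrow> 'n) \<Rightarrow> real^'n^'e" where
  "incidence src dst = (\<chi> e i. if i = src e then 1 else if i = dst e then -1 else 0)"

definition rho :: "real^'n::finite^'n \<Rightarrow> real" where
  "rho B = Max {\<mu>. \<exists>v. v \<noteq> 0 \<and> B *v v = \<mu> *\<^sub>R v}"

primrec matpow :: "real^'n::finite^'n \<Rightarrow> nat \<Rightarrow> real^'n^'n" where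
  "matpow M 0 = mat 1"
| "matpow M (Suc t) = M ** matpow M t"

definition fobj :: "('n::finite \<Rightarrow> real \<Rightarrow> real) \<Rightarrow> real^'n \<Rightarrow> real" where
  "fobj fs x = (\<Sum>i\<in>UNIV. fs i (x $ i))"

definition fgrad :: "('n::finite \<Rightarrow> real \<Rightarrow> real) \<Rightarrow> real^'n \<Rightarrow> real^'n" where
  "fgrad fs x = (\<chi> i. deriv (fs i) (x $ i))"

definition inner_loop ::
  "real \<Rightarrow> real^'n::finite^'e::finite \<Rightarrow> real^'n^'n \<Rightarrow> real^'n \<Rightarrow> real^'e \<Rightarrow> nat \<Rightarrow> real^'n \<Rightarrow> real^'n" where
  "inner_loop \<alpha> A B g l T z0 =
     ((\<lambda>z. z - \<alpha> *\<^sub>R g - \<alpha> *\<^sub>R (transpose A *v l) - \<alpha> *\<^sub>R (B *v z)) ^^ T) z0"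

primrec flexpd ::
  "('n::finite \<Rightarrow> real \<Rightarrow> real) \<Rightarrow> real^'n^'e::finite \<Rightarrow> real^'n^'n \<Rightarrow> real \<Rightarrow> real \<Rightarrow> nat \<Rightarrow> real^'n
   \<Rightarrow> nat \<Rightarrow> (real^'n) \<times> (real^'e)" where
  "flexpd fs A B \<alpha> \<beta> T x0 0 = (x0, 0)"
| "flexpd fs A B \<alpha> \<beta> T x0 (Suc k) =
     (let (x, l) = flexpd fs A B \<alpha> \<beta> T x0 k;
          x' = inner_loop \<alpha> A B (fgrad fs x) l T x
      in (x', l + \<beta> *\<^sub>R (A *v x')))"

end

theory Submission
  imports Defs
begin

text \<open>Write \<open>W = I - \<alpha>B\<close> and \<open>C = \<Sum>t<T. W^t\<close>. The \<open>T\<close> inner steps unroll to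
  \<open>x(k+1) = W^T x(k) - \<alpha> C (\<nabla>f(x(k)) + A' \<lambda>(k))\<close>. For symmetric \<open>W\<close> the geometric sum
  \<open>C\<close> is singular only if \<open>-1\<close> is an eigenvalue of \<open>W\<close>, i.e. if \<open>2/\<alpha>\<close> is an eigenvalue of
  \<open>B\<close>, which \<open>\<alpha> < 1/\<rho>(B)\<close> excludes. Applying \<open>C\<inverse>\<close> to the unrolled step and substituting
  \<open>\<lambda>(k) = \<lambda>(k+1) - \<beta> A x(k+1)\<close>, \<open>\<nabla>f(x*) = -A' \<lambda>*\<close>, \<open>A x* = 0\<close> and \<open>W x* = x*\<close> gives the
  identity.\<close>

lemma sum_matrix_vector_mult:
  fixes F :: "'a \<Rightarrow> real^'n::finite^'m::finite"
  shows "(\<Sum>s\<in>S. F s) *v y = (\<Sum>s\<in>S. F s *v y)"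
proof (cases "finite S")
  case True
  then show ?thesis
    by (induction S rule: finite_induct) (auto simp: matrix_vector_mult_add_rdistrib)
qed simp

lemma inner_matrix_vector_symmetric:
  fixes A :: "real^'n::finite^'n"
  assumes "transpose A = A"
  shows "(A *v u) \<bullet> w = u \<bullet> (A *v w)"
  by (metis assms dot_lmul_matrix vector_transpose_matrix)

lemma transpose_diff: "transpose (X - Y) = transpose X - transpose (Y::real^'n::finite^'m::finite)"
  by (simp add: transpose_def vec_eq_iff)

lemma matpow_add: "matpow W (s + t) = matpow W s ** matpow W t"
  by (induction s) (auto simp: matrix_mul_assoc)

lemma matpow_Suc_right: "matpow W (Suc t) = matpow W t ** W"
  by (induction t) (auto simp: matrix_mul_assoc)

lemma matpow_fixed_point:
  assumes "W *v v = v"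
  shows "matpow W t *v v = v"
  using assms by (induction t) (simp_all flip: matrix_vector_mul_assoc)

lemma transpose_matpow_symmetric:
  assumes "transpose W = W"
  shows "transpose (matpow W t) = matpow W t"
proof (induction t)
  case (Suc t)
  then show ?case
    by (simp add: matrix_transpose_mul assms flip: matpow_Suc_right)
qed simp

lemma matpow_fixed_of_geometric_sum_eq_0:
  assumes "(\<Sum>s<T. matpow W s *v v) = 0"
  shows "matpow W T *v v = v"
proof -
  have "v - matpow W T *v v = (\<Sum>s<T. matpow W s *v v - matpow W (Suc s) *v v)"
    by (subst sum_lessThan_telescope') simp
  also have "\<dots> = (\<Sum>s<T. matpow W s *v v) - W *v (\<Sum>s<T. matpow W s *v v)"
    by (simp add: vec.sum sum_subtractf matrix_vector_mul_assoc)
  finally show ?thesis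
    using assms by simp
qed

lemma symmetric_matpow_fixed_imp_involutive:
  fixes W :: "real^'n::finite^'n"
  assumes sym: "transpose W = W" and T: "1 \<le> T" and fixed: "matpow W T *v v = v"
  shows "W *v (W *v v) = v"
proof -
  txt \<open>By symmetry \<open>(\<Sum>j<T. |W^j w|\<^sup>2) = w \<bullet> (\<Sum>j<T. W^(2j) w)\<close>, and the latter sum
    telescopes to \<open>W^(2T) v - v = 0\<close>.\<close>
  define w where "w = W *v (W *v v) - v"
  have two_steps: "matpow W (2 * Suc j) *v v = matpow W (2 * j) *v (W *v (W *v v))" for j
    by (simp add: matpow_Suc_right matrix_mul_assoc matrix_vector_mul_assoc del: matpow.simps(2))
  have "(\<Sum>j<T. matpow W (2 * j) *v w) =
        (\<Sum>j<T. matpow W (2 * Suc j) *v v - matpow W (2 * j) *v v)"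
    by (simp only: w_def matrix_vector_mult_diff_distrib two_steps)
  also have "\<dots> = matpow W (T + T) *v v - v"
    by (subst sum_lessThan_telescope) (simp add: mult_2)
  also have "\<dots> = 0"
    using fixed by (simp add: matpow_add flip: matrix_vector_mul_assoc)
  finally have "0 = w \<bullet> (\<Sum>j<T. matpow W (2 * j) *v w)"
    by simp
  also have "\<dots> = (\<Sum>j<T. (matpow W j *v w) \<bullet> (matpow W j *v w))"
    by (simp add: inner_sum_right mult_2 matpow_add matrix_vector_mul_assoc
        inner_matrix_vector_symmetric[OF transpose_matpow_symmetric[OF sym]])
  finally have "\<forall>j<T. (matpow W j *v w) \<bullet> (matpow W j *v w) = 0"
    by (simp add: sum_nonneg_eq_0_iff)
  then have "w = 0"
    using T by (metis inner_eq_zero_iff less_le_trans matpow.simps(1) matrix_vector_mul_lid zero_less_one)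
  then show ?thesis
    by (simp add: w_def)
qed

lemma invertible_geometric_sum_symmetric:
  fixes W :: "real^'n::finite^'n"
  assumes sym: "transpose W = W" and no_neg_one: "\<And>u. W *v u = - u \<Longrightarrow> u = 0"
    and T: "1 \<le> T"
  shows "invertible (\<Sum>t<T. matpow W t)"
proof -
  have "v = 0" if ker: "(\<Sum>t<T. matpow W t) *v v = 0" for v
  proof -
    have "matpow W T *v v = v"
      using ker by (simp add: sum_matrix_vector_mult matpow_fixed_of_geometric_sum_eq_0)
    then have "W *v (W *v v) = v"
      by (rule symmetric_matpow_fixed_imp_involutive[OF sym T])
    then have "W *v (v - W *v v) = - (v - W *v v)"
      by (simp add: matrix_vector_mult_diff_distrib)
    then have "v - W *v v = 0"
      by (rule no_neg_one)
    then have "W *v v = v"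
      by simp
    then have "real T *\<^sub>R v = 0"
      using ker by (simp only: sum_matrix_vector_mult matpow_fixed_point sum_constant_scaleR
          card_lessThan)
    then show "v = 0"
      using T by (simp only: scaleR_eq_0_iff) simp
  qed
  then show ?thesis
    by (simp add: invertible_left_inverse matrix_left_invertible_ker)
qed

lemma matrix_inv_left:
  fixes A :: "real^'n::finite^'n"
  assumes "invertible A"
  shows "matrix_inv A ** A = mat 1"
proof -
  obtain A' where "A ** A' = mat 1 \<and> A' ** A = mat 1"
    using assms unfolding invertible_def by blast
  then show ?thesis
    unfolding matrix_inv_def by (rule someI2) simp
qed

lemma finite_eigenvalues_symmetric:
  fixes B :: "real^'n::finite^'n"
  assumes sym: "transpose B = B"
  shows "finite {\<mu>. \<exists>v. v \<noteq> 0 \<and> B *v v = \<mu> *\<^sub>R v}"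
proof -
  define S where "S = {\<mu>. \<exists>v. v \<noteq> 0 \<and> B *v v = \<mu> *\<^sub>R v}"
  define ev where "ev \<mu> = (SOME v. v \<noteq> 0 \<and> B *v v = \<mu> *\<^sub>R v)" for \<mu>
  have ev_nonzero: "ev \<mu> \<noteq> 0" and ev_eigen: "B *v ev \<mu> = \<mu> *\<^sub>R ev \<mu>" if "\<mu> \<in> S" for \<mu>
    using someI_ex[of "\<lambda>v. v \<noteq> 0 \<and> B *v v = \<mu> *\<^sub>R v"] that
    by (simp_all add: S_def ev_def)
  have "inj_on ev S"
  proof (rule inj_onI)
    fix a b assume a: "a \<in> S" and b: "b \<in> S" and "ev a = ev b"
    then have "a *\<^sub>R ev a = b *\<^sub>R ev a"
      using ev_eigen by metis
    then show "a = b"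
      using ev_nonzero[OF a] by simp
  qed
  moreover have "pairwise orthogonal (ev ` S)"
  proof (rule pairwise_imageI)
    fix a b assume a: "a \<in> S" and b: "b \<in> S" and "ev a \<noteq> ev b"
    then have "a \<noteq> b"
      by auto
    have "a * (ev a \<bullet> ev b) = (B *v ev a) \<bullet> ev b"
      using ev_eigen[OF a] by simp
    also have "\<dots> = ev a \<bullet> (B *v ev b)"
      using sym by (rule inner_matrix_vector_symmetric)
    also have "\<dots> = b * (ev a \<bullet> ev b)"
      using ev_eigen[OF b] by simp
    finally show "orthogonal (ev a) (ev b)"
      using \<open>a \<noteq> b\<close> by (simp add: orthogonal_def)
  qed
  then have "finite (ev ` S)"
    by (rule pairwise_orthogonal_imp_finite)
  ultimately show ?thesis
    unfolding S_def [symmetric] by (rule finite_imageD[rotated])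
qed

lemma eigenvalue_le_rho:
  fixes B :: "real^'n::finite^'n"
  assumes "transpose B = B" and "v \<noteq> 0" and "B *v v = \<mu> *\<^sub>R v"
  shows "\<mu> \<le> rho B"
  unfolding rho_def using assms by (intro Max_ge finite_eigenvalues_symmetric) blast+

lemma neg_one_not_eigenvalue_step_matrix:
  fixes B :: "real^'n::finite^'n"
  assumes sym: "transpose B = B" and \<alpha>: "0 < \<alpha>" "\<alpha> < 1 / rho B"
    and u: "(mat 1 - \<alpha> *\<^sub>R B) *v u = - u"
  shows "u = 0"
proof (rule ccontr)
  assume "u \<noteq> 0"
  from u have "\<alpha> *\<^sub>R (B *v u) = 2 *\<^sub>R u"
    by (simp add: scaleR_matrix_vector_assoc algebra_simps scaleR_2)
  then have "B *v u = (2 / \<alpha>) *\<^sub>R u"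
    using \<alpha>(1) by (simp add: eq_vector_fraction_iff)
  then have "2 / \<alpha> \<le> rho B"
    using sym \<open>u \<noteq> 0\<close> by (rule eigenvalue_le_rho[rotated 2])
  moreover have "0 < rho B"
    using \<alpha> by (metis less_trans zero_less_divide_1_iff)
  ultimately show False
    using \<alpha> by (simp add: divide_le_eq less_divide_eq mult.commute)
qed

lemma invertible_geometric_sum_step_matrix:
  fixes B :: "real^'n::finite^'n"
  assumes sym: "transpose B = B" and "1 \<le> T" "0 < \<alpha>" "\<alpha> < 1 / rho B"
  shows "invertible (\<Sum>t<T. matpow (mat 1 - \<alpha> *\<^sub>R B) t)"
proof (rule invertible_geometric_sum_symmetric)
  show "transpose (mat 1 - \<alpha> *\<^sub>R B) = mat 1 - \<alpha> *\<^sub>R B"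
    by (simp add: transpose_diff transpose_scalar sym)
qed (use assms neg_one_not_eigenvalue_step_matrix in auto)

lemma inner_loop_closed_form:
  "inner_loop \<alpha> A B g l t z =
     matpow (mat 1 - \<alpha> *\<^sub>R B) t *v z
     - \<alpha> *\<^sub>R ((\<Sum>s<t. matpow (mat 1 - \<alpha> *\<^sub>R B) s) *v (g + transpose A *v l))"
proof (induction t)
  case 0
  then show ?case
    by (simp add: inner_loop_def)
next
  case (Suc t)
  define W where "W = mat 1 - \<alpha> *\<^sub>R B"
  define y where "y = g + transpose A *v l"
  have step: "inner_loop \<alpha> A B g l (Suc t) z = W *v inner_loop \<alpha> A B g l t z - \<alpha> *\<^sub>R y"
    by (simp add: inner_loop_def W_def y_def scaleR_matrix_vector_assoc algebra_simps)
  have geometric: "(\<Sum>s<Suc t. matpow W s) *v y = y + W *v ((\<Sum>s<t. matpow W s) *v y)"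
    by (simp add: sum.lessThan_Suc_shift sum_matrix_vector_mult vec.sum matrix_vector_mult_add_rdistrib
        del: sum.lessThan_Suc flip: matrix_vector_mul_assoc)
  have "inner_loop \<alpha> A B g l (Suc t) z =
        W *v (matpow W t *v z - \<alpha> *\<^sub>R ((\<Sum>s<t. matpow W s) *v y)) - \<alpha> *\<^sub>R y"
    unfolding step Suc W_def y_def ..
  also have "\<dots> = matpow W (Suc t) *v z - \<alpha> *\<^sub>R (y + W *v ((\<Sum>s<t. matpow W s) *v y))"
    by (simp add: matrix_vector_mul_assoc algebra_simps)
  also have "\<dots> = matpow W (Suc t) *v z - \<alpha> *\<^sub>R ((\<Sum>s<Suc t. matpow W s) *v y)"
    by (simp only: geometric)
  finally show ?case
    by (simp only: W_def y_def)
qed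

lemma flexpd_Suc_primal:
  "fst (flexpd fs A B \<alpha> \<beta> T x0 (Suc k)) =
     inner_loop \<alpha> A B (fgrad fs (fst (flexpd fs A B \<alpha> \<beta> T x0 k)))
       (snd (flexpd fs A B \<alpha> \<beta> T x0 k)) T (fst (flexpd fs A B \<alpha> \<beta> T x0 k))"
  by (simp add: split_def Let_def)

lemma flexpd_Suc_dual:
  "snd (flexpd fs A B \<alpha> \<beta> T x0 (Suc k)) =
     snd (flexpd fs A B \<alpha> \<beta> T x0 k) + \<beta> *\<^sub>R (A *v fst (flexpd fs A B \<alpha> \<beta> T x0 (Suc k)))"
  by (simp add: split_def Let_def)

lemma primal_dual_error_identity:
  fixes A :: "real^'n::finite^'e::finite" and Ci M N :: "real^'n^'n"
  assumes primal: "Ci *v x' = M *v x - \<alpha> *\<^sub>R (g + transpose A *v l)"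
    and dual: "l' = l + \<beta> *\<^sub>R (A *v x')"
    and N_apply: "\<And>u. \<alpha> *\<^sub>R (N *v u) = Ci *v u - M *v u"
    and M_xs: "M *v xs = Ci *v xs" and feasible: "A *v xs = 0"
    and stationary: "gs + transpose A *v ls = 0"
  shows "\<alpha> *\<^sub>R (g - gs) =
           M *v (x - x') + \<alpha> *\<^sub>R ((\<beta> *\<^sub>R (transpose A ** A) - N) *v (x' - xs))
         - \<alpha> *\<^sub>R (transpose A *v (l' - ls))"
proof -
  have "M *v (x - x') + \<alpha> *\<^sub>R ((\<beta> *\<^sub>R (transpose A ** A) - N) *v (x' - xs))
          - \<alpha> *\<^sub>R (transpose A *v (l' - ls))
      = M *v x - M *v x' - \<alpha> *\<^sub>R (N *v x') + \<alpha> *\<^sub>R (N *v xs)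
          - \<alpha> *\<^sub>R (transpose A *v l) + \<alpha> *\<^sub>R (transpose A *v ls)"
    using feasible
    by (simp add: dual algebra_simps flip: scaleR_matrix_vector_assoc matrix_vector_mul_assoc)
  also have "\<dots> = M *v x - Ci *v x' - \<alpha> *\<^sub>R (transpose A *v l) + \<alpha> *\<^sub>R (transpose A *v ls)"
    by (simp add: N_apply M_xs)
  also have "\<dots> = \<alpha> *\<^sub>R (g - gs)"
    using stationary by (simp add: primal algebra_simps flip: eq_neg_iff_add_eq_0)
  finally show ?thesis
    by simp
qed

theorem lemma3p15:
  fixes src dst :: "'e::finite \<Rightarrow> 'n::finite"
    and fs :: "'n \<Rightarrow> real \<Rightarrow> real"
    and m L \<alpha> \<beta> :: real and T :: nat
    and A :: "real^'n^'e" and B :: "real^'n^'n"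
    and x0 xs :: "real^'n" and ls :: "real^'e"
    and x :: "nat \<Rightarrow> real^'n" and lam :: "nat \<Rightarrow> real^'e"
    and C M N :: "real^'n^'n"
  assumes graph: "simple_graph src dst" "graph_connected src dst"
    and A_def: "A = incidence src dst"
    and f_diff: "\<And>i t. fs i differentiable at t"
    and f_diff2: "\<And>i t. deriv (fs i) differentiable at t"
    and f_bounds: "\<And>i t. m \<le> deriv (deriv (fs i)) t \<and> deriv (deriv (fs i)) t \<le> L"
    and mL: "0 < m" "m \<le> L"
    and B_sym: "transpose B = B"
    and B_psd: "\<And>v. 0 \<le> v \<bullet> (B *v v)"
    and B_null: "{v. B *v v = 0} = {v. A *v v = 0}"
    and B_sparse: "\<And>i j. i \<noteq> j \<Longrightarrow> B $ i $ j \<noteq> 0 \<Longrightarrow> adjacent src dst i j"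
    and xs_opt: "A *v xs = 0" "\<And>y. A *v y = 0 \<Longrightarrow> fobj fs xs \<le> fobj fs y"
    and xs_unique: "\<And>y. A *v y = 0 \<Longrightarrow> fobj fs y \<le> fobj fs xs \<Longrightarrow> y = xs"
    and kkt: "fgrad fs xs + transpose A *v ls = 0" "B *v xs = 0"
    and ls_col: "ls \<in> range (\<lambda>y. A *v y)"
    and params: "0 < \<beta>" "1 \<le> T" "0 < \<alpha>" "\<alpha> < 1 / rho B"
    and iter: "\<And>k. x k = fst (flexpd fs A B \<alpha> \<beta> T x0 k)"
              "\<And>k. lam k = snd (flexpd fs A B \<alpha> \<beta> T x0 k)"
    and C_def: "C = (\<Sum>t<T. matpow (mat 1 - \<alpha> *\<^sub>R B) t)"
    and M_def: "M = matrix_inv C ** matpow (mat 1 - \<alpha> *\<^sub>R B) T"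
    and N_def: "N = (1 / \<alpha>) *\<^sub>R (matrix_inv C - M)"
  shows "\<alpha> *\<^sub>R (fgrad fs (x k) - fgrad fs xs) =
           M *v (x k - x (Suc k))
         + \<alpha> *\<^sub>R ((\<beta> *\<^sub>R (transpose A ** A) - N) *v (x (Suc k) - xs))
         - \<alpha> *\<^sub>R (transpose A *v (lam (Suc k) - ls))"
proof -
  define W where "W = mat 1 - \<alpha> *\<^sub>R B"
  define Ci where "Ci = matrix_inv C"
  have "Ci ** C = mat 1"
    unfolding Ci_def C_def
    by (rule matrix_inv_left[OF invertible_geometric_sum_step_matrix[OF B_sym params(2-4)]])
  then have Ci_C: "Ci *v (C *v u) = u" for u
    by (simp add: matrix_vector_mul_assoc)
  have M_apply: "M *v u = Ci *v (matpow W T *v u)" for u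
    by (simp add: M_def Ci_def W_def matrix_vector_mul_assoc)
  have "x (Suc k) = matpow W T *v x k - \<alpha> *\<^sub>R (C *v (fgrad fs (x k) + transpose A *v lam k))"
    by (simp only: iter flexpd_Suc_primal inner_loop_closed_form C_def W_def)
  then have primal: "Ci *v x (Suc k) = M *v x k - \<alpha> *\<^sub>R (fgrad fs (x k) + transpose A *v lam k)"
    by (simp add: M_apply Ci_C matrix_vector_mult_diff_distrib matrix_vector_mult_scaleR)
  have dual: "lam (Suc k) = lam k + \<beta> *\<^sub>R (A *v x (Suc k))"
    by (simp only: iter flexpd_Suc_dual)
  have N_apply: "\<alpha> *\<^sub>R (N *v u) = Ci *v u - M *v u" for u
    using params(3) by (simp add: N_def Ci_def matrix_vector_mult_diff_rdistrib
        flip: scaleR_matrix_vector_assoc)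
  have "W *v xs = xs"
    by (simp add: W_def matrix_vector_mult_diff_rdistrib kkt(2) flip: scaleR_matrix_vector_assoc)
  then have M_xs: "M *v xs = Ci *v xs"
    by (simp add: M_apply matpow_fixed_point)
  show ?thesis
    using primal dual N_apply M_xs xs_opt(1) kkt(1) by (rule primal_dual_error_identity)
qed

end
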